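(* For a positive integer $n$, let $D_n$ be the tournament on vertex set $\{v_1,\ldots,v_n\}$ in which, for $1\le i<j\le n$ with $(i,j)\neq(1,n)$, the edge between $v_i$ and $v_j$ is directed from $v_i$ to $v_j$, and the edge between $v_1$ and $v_n$ is directed from $v_n$ to $v_1$. Then for all positive integers $n,k$ (with $n\ge 2$), $P_{v_1\approx v_n}(D_n;k)=k(k-1)^{n-2}$, $P_{v_1\not\approx v_n}(D_n;k)=k^{n-1}(k-1)$, and consequently $P(D_n;k)=k(k-1)^{n-2}+k^{n-1}(k-1)$.
   Context: For a positive integer $k$, a proper $k$-coloring of a digraph $D$ is a map $c:V(D)\to\{1,\ldots,k\}$ such that each color class induces a subdigraph with no directed cycle; $P(D;k)$ is the number of proper $k$-colorings. For vertices $u,v$, $P_{u\approx v}(D;k)$ is the number of proper $k$-colorings in which $u$ and $v$ receive the same color, and $P_{u\not\approx v}(D;k)$ the number in which they receive different colors. *)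

theory Defs
  imports Main "HOL-Library.FuncSet"
begin

definition proper_colorings :: "'a set \<Rightarrow> ('a \<times> 'a) set \<Rightarrow> nat \<Rightarrow> ('a \<Rightarrow> nat) set" where
  "proper_colorings V E k =
     {c \<in> V \<rightarrow>\<^sub>E {1..k}. \<forall>i \<in> {1..k}. acyclic (E \<inter> ({v \<in> V. c v = i} \<times> {v \<in> V. c v = i}))}"

definition P_chrom :: "'a set \<Rightarrow> ('a \<times> 'a) set \<Rightarrow> nat \<Rightarrow> nat" where
  "P_chrom V E k = card (proper_colorings V E k)"

definition P_same :: "'a set \<Rightarrow> ('a \<times> 'a) set \<Rightarrow> 'a \<Rightarrow> 'a \<Rightarrow> nat \<Rightarrow> nat" where
  "P_same V E u v k = card {c \<in> proper_colorings V E k. c u = c v}"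

definition P_diff :: "'a set \<Rightarrow> ('a \<times> 'a) set \<Rightarrow> 'a \<Rightarrow> 'a \<Rightarrow> nat \<Rightarrow> nat" where
  "P_diff V E u v k = card {c \<in> proper_colorings V E k. c u \<noteq> c v}"

definition Dn_vertices :: "nat \<Rightarrow> nat set" where
  "Dn_vertices n = {1..n}"

definition Dn_arcs :: "nat \<Rightarrow> (nat \<times> nat) set" where
  "Dn_arcs n = {(i, j). 1 \<le> i \<and> i < j \<and> j \<le> n \<and> (i, j) \<noteq> (1, n)} \<union> {(n, 1)}"

end

theory Submission
  imports Defs
begin

text \<open>Every arc of \<open>D\<^sub>n\<close> except \<open>v\<^sub>n \<rightarrow> v\<^sub>1\<close> increases the index, so a directed cycle inside a
  colour class must use that arc; it exists exactly when the class contains \<open>v\<^sub>1\<close>, \<open>v\<^sub>n\<close> and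
  some \<open>v\<^sub>j\<close> in between, closing \<open>v\<^sub>1 \<rightarrow> v\<^sub>j \<rightarrow> v\<^sub>n \<rightarrow> v\<^sub>1\<close>. Hence the proper colourings are the
  maps with \<open>c v\<^sub>1 \<noteq> c v\<^sub>n\<close>, together with those where \<open>c v\<^sub>1 = c v\<^sub>n\<close> and no other vertex
  has that colour; both families are counted by fixing the colours of \<open>v\<^sub>1\<close> and \<open>v\<^sub>n\<close> first.\<close>

lemma P_chrom_eq_P_same_add_P_diff:
  assumes "finite V"
  shows "P_chrom V E k = P_same V E u v k + P_diff V E u v k"
proof -
  have "finite (proper_colorings V E k)"
    by (rule finite_subset[of _ "V \<rightarrow>\<^sub>E {1..k}"])
       (auto simp: proper_colorings_def intro: finite_PiE assms)
  then show ?thesis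
    unfolding P_chrom_def P_same_def P_diff_def
    by (subst card_Un_disjoint[symmetric]) (auto intro: arg_cong[where f = card])
qed

lemma card_PiE_two_points_fixed:
  assumes "finite A" "x \<in> A" "y \<in> A" "x \<noteq> y"
  shows "card (PiE A (\<lambda>z. if z = x then {a} else if z = y then {b} else C))
           = card C ^ (card A - 2)"
proof -
  have A: "A = insert x (insert y (A - {x, y}))"
    using assms by auto
  have card_rest: "card (A - {x, y}) = card A - 2"
    using assms by (simp add: card_Diff_subset)
  have "(\<Prod>z\<in>A. card (if z = x then {a} else if z = y then {b} else C))
          = (\<Prod>z\<in>A - {x, y}. card C)"
    using assms by (subst A) (simp add: prod.insert)
  also have "\<dots> = card C ^ (card A - 2)"
    using card_rest by simp
  finally show ?thesis
    using assms by (simp add: card_PiE)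
qed

lemma card_PiE_equal_exactly_at_two_points:
  assumes "finite A" "finite B" "x \<in> A" "y \<in> A" "x \<noteq> y"
  shows "card {c \<in> A \<rightarrow>\<^sub>E B. c x = c y \<and> (\<forall>z \<in> A - {x, y}. c z \<noteq> c x)}
           = card B * (card B - 1) ^ (card A - 2)"
proof -
  let ?F = "\<lambda>a. PiE A (\<lambda>z. if z = x then {a} else if z = y then {a} else B - {a})"
  have "{c \<in> A \<rightarrow>\<^sub>E B. c x = c y \<and> (\<forall>z \<in> A - {x, y}. c z \<noteq> c x)} = (\<Union>a\<in>B. ?F a)"
  proof (intro equalityI subsetI)
    fix c assume "c \<in> {c \<in> A \<rightarrow>\<^sub>E B. c x = c y \<and> (\<forall>z \<in> A - {x, y}. c z \<noteq> c x)}"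
    with assms have "c x \<in> B" "c \<in> ?F (c x)"
      by (auto simp: PiE_iff)
    then show "c \<in> (\<Union>a\<in>B. ?F a)"
      by blast
  next
    fix c assume "c \<in> (\<Union>a\<in>B. ?F a)"
    then obtain a where "a \<in> B" and c: "c \<in> ?F a"
      by blast
    then have "?F a \<subseteq> A \<rightarrow>\<^sub>E B"
      by (intro PiE_mono) auto
    with c have "c \<in> A \<rightarrow>\<^sub>E B"
      by blast
    moreover have "c x = a" "c y = a" "\<forall>z \<in> A - {x, y}. c z \<noteq> a"
      using assms PiE_mem[OF c] by force+
    ultimately show "c \<in> {c \<in> A \<rightarrow>\<^sub>E B. c x = c y \<and> (\<forall>z \<in> A - {x, y}. c z \<noteq> c x)}"
      by simp
  qed
  also have "card \<dots> = (\<Sum>a\<in>B. card (?F a))"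
  proof (intro card_UN_disjoint)
    have "c x = a" if "c \<in> ?F a" for c a
      using PiE_mem[OF that \<open>x \<in> A\<close>] by simp
    then show "\<forall>a\<in>B. \<forall>a'\<in>B. a \<noteq> a' \<longrightarrow> ?F a \<inter> ?F a' = {}"
      by blast
  qed (use assms in \<open>auto intro!: finite_PiE\<close>)
  also have "\<dots> = (\<Sum>a\<in>B. (card B - 1) ^ (card A - 2))"
    using assms by (intro sum.cong) (simp_all add: card_PiE_two_points_fixed)
  finally show ?thesis
    by simp
qed

lemma card_PiE_distinct_at_two_points:
  assumes "finite A" "finite B" "x \<in> A" "y \<in> A" "x \<noteq> y"
  shows "card {c \<in> A \<rightarrow>\<^sub>E B. c x \<noteq> c y} = card B * (card B - 1) * card B ^ (card A - 2)"
proof -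
  let ?F = "\<lambda>a b. PiE A (\<lambda>z. if z = x then {a} else if z = y then {b} else B)"
  have value_at_x: "c x = a" and value_at_y: "c y = b" if "c \<in> ?F a b" for c a b
    using PiE_mem[OF that \<open>x \<in> A\<close>] PiE_mem[OF that \<open>y \<in> A\<close>] assms by simp_all
  have finite_F: "finite (?F a b)" for a b
    using assms by (intro finite_PiE) auto
  have "{c \<in> A \<rightarrow>\<^sub>E B. c x \<noteq> c y} = (\<Union>a\<in>B. \<Union>b\<in>B - {a}. ?F a b)"
  proof (intro equalityI subsetI)
    fix c assume "c \<in> {c \<in> A \<rightarrow>\<^sub>E B. c x \<noteq> c y}"
    with assms have "c x \<in> B" "c y \<in> B - {c x}" "c \<in> ?F (c x) (c y)"
      by (auto simp: PiE_iff)
    then show "c \<in> (\<Union>a\<in>B. \<Union>b\<in>B - {a}. ?F a b)"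
      by blast
  next
    fix c assume "c \<in> (\<Union>a\<in>B. \<Union>b\<in>B - {a}. ?F a b)"
    then obtain a b where "a \<in> B" "b \<in> B - {a}" and c: "c \<in> ?F a b"
      by blast
    then have "?F a b \<subseteq> A \<rightarrow>\<^sub>E B"
      by (intro PiE_mono) auto
    with c have "c \<in> A \<rightarrow>\<^sub>E B"
      by blast
    moreover note value_at_x[OF c] value_at_y[OF c]
    ultimately show "c \<in> {c \<in> A \<rightarrow>\<^sub>E B. c x \<noteq> c y}"
      using \<open>b \<in> B - {a}\<close> by auto
  qed
  also have "card \<dots> = (\<Sum>a\<in>B. card (\<Union>b\<in>B - {a}. ?F a b))"
    using assms finite_F by (intro card_UN_disjoint) (auto dest: value_at_x)
  also have "\<dots> = (\<Sum>a\<in>B. \<Sum>b\<in>B - {a}. card (?F a b))"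
    using assms finite_F by (intro sum.cong refl card_UN_disjoint) (auto dest: value_at_y)
  also have "\<dots> = (\<Sum>a\<in>B. \<Sum>b\<in>B - {a}. card B ^ (card A - 2))"
    using assms by (intro sum.cong) (simp_all add: card_PiE_two_points_fixed)
  finally show ?thesis
    using assms by simp
qed

lemma acyclic_Dn_arcs_induced_iff:
  assumes "n \<ge> 2" "S \<subseteq> Dn_vertices n"
  shows "acyclic (Restr (Dn_arcs n) S) \<longleftrightarrow> \<not> (1 \<in> S \<and> n \<in> S \<and> (\<exists>j \<in> S. 1 < j \<and> j < n))"
proof
  assume acyc: "acyclic (Restr (Dn_arcs n) S)"
  show "\<not> (1 \<in> S \<and> n \<in> S \<and> (\<exists>j \<in> S. 1 < j \<and> j < n))"
  proof
    assume "1 \<in> S \<and> n \<in> S \<and> (\<exists>j \<in> S. 1 < j \<and> j < n)"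
    then obtain j where "1 \<in> S" "n \<in> S" "j \<in> S" "1 < j" "j < n"
      by blast
    then have "(1, j) \<in> Restr (Dn_arcs n) S" "(j, n) \<in> Restr (Dn_arcs n) S"
      "(n, 1) \<in> Restr (Dn_arcs n) S"
      by (auto simp: Dn_arcs_def)
    then have "(1, 1) \<in> (Restr (Dn_arcs n) S)\<^sup>+"
      by (meson trancl.r_into_trancl trancl.trancl_into_trancl)
    with acyc show False
      unfolding acyclic_def by blast
  qed
next
  assume no_cycle: "\<not> (1 \<in> S \<and> n \<in> S \<and> (\<exists>j \<in> S. 1 < j \<and> j < n))"
  show "acyclic (Restr (Dn_arcs n) S)"
  proof (cases "1 \<in> S \<and> n \<in> S")
    case True
    have "S \<subseteq> {1, n}"
    proof
      fix j assume "j \<in> S"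
      with assms have "1 \<le> j" "j \<le> n"
        by (auto simp: Dn_vertices_def)
      moreover have "\<not> (1 < j \<and> j < n)"
        using no_cycle True \<open>j \<in> S\<close> by blast
      ultimately show "j \<in> {1, n}"
        by auto
    qed
    then have "Restr (Dn_arcs n) S \<subseteq> {(n, 1)}"
      by (auto simp: Dn_arcs_def)
    with assms show ?thesis
      by (intro acyclicI_order[where f = id]) auto
  next
    case False
    then have "Restr (Dn_arcs n) S \<subseteq> {(a, b). a < b}"
      by (auto simp: Dn_arcs_def)
    then show ?thesis
      by (intro acyclicI_order[where f = "\<lambda>a. - int a"]) auto
  qed
qed

lemma proper_colorings_Dn:
  assumes "n \<ge> 2"
  shows "proper_colorings (Dn_vertices n) (Dn_arcs n) k
           = {c \<in> {1..n} \<rightarrow>\<^sub>E {1..k}. c 1 = c n \<longrightarrow> (\<forall>j \<in> {1..n} - {1, n}. c j \<noteq> c 1)}"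
  unfolding proper_colorings_def
proof (intro Collect_cong conj_cong)
  show "c \<in> Dn_vertices n \<rightarrow>\<^sub>E {1..k} \<longleftrightarrow> c \<in> {1..n} \<rightarrow>\<^sub>E {1..k}" for c
    by (simp add: Dn_vertices_def)
next
  fix c assume c: "c \<in> {1..n} \<rightarrow>\<^sub>E {1..k}"
  have class_acyclic_iff: "acyclic (Restr (Dn_arcs n) {v \<in> Dn_vertices n. c v = i})
      \<longleftrightarrow> \<not> (c 1 = i \<and> c n = i \<and> (\<exists>j \<in> {1..n} - {1, n}. c j = i))" for i
    using assms by (subst acyclic_Dn_arcs_induced_iff) (auto simp: Dn_vertices_def)
  have "c 1 \<in> {1..k}"
    using c assms by auto
  then show "(\<forall>i \<in> {1..k}. acyclic (Restr (Dn_arcs n) {v \<in> Dn_vertices n. c v = i}))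
      \<longleftrightarrow> (c 1 = c n \<longrightarrow> (\<forall>j \<in> {1..n} - {1, n}. c j \<noteq> c 1))"
    by (simp only: class_acyclic_iff) auto
qed

theorem mainTheorem10:
  fixes n k :: nat
  assumes "n \<ge> 2" and "k \<ge> 1"
  shows "P_same (Dn_vertices n) (Dn_arcs n) 1 n k = k * (k - 1) ^ (n - 2) \<and>
         P_diff (Dn_vertices n) (Dn_arcs n) 1 n k = k ^ (n - 1) * (k - 1) \<and>
         P_chrom (Dn_vertices n) (Dn_arcs n) k = k * (k - 1) ^ (n - 2) + k ^ (n - 1) * (k - 1)"
proof -
  \<comment> \<open>the counts also hold for \<open>k = 0\<close>\<close>
  have endpoints: "(1::nat) \<in> {1..n}" "n \<in> {1..n}" "1 \<noteq> n"
    using assms(1) by auto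
  have "{c \<in> proper_colorings (Dn_vertices n) (Dn_arcs n) k. c 1 = c n}
          = {c \<in> {1..n} \<rightarrow>\<^sub>E {1..k}. c 1 = c n \<and> (\<forall>z \<in> {1..n} - {1, n}. c z \<noteq> c 1)}"
    by (auto simp: proper_colorings_Dn[OF assms(1)])
  then have same: "P_same (Dn_vertices n) (Dn_arcs n) 1 n k = k * (k - 1) ^ (n - 2)"
    using card_PiE_equal_exactly_at_two_points[of "{1..n}" "{1..k}" 1 n] endpoints
    by (simp add: P_same_def)
  have "{c \<in> proper_colorings (Dn_vertices n) (Dn_arcs n) k. c 1 \<noteq> c n}
          = {c \<in> {1..n} \<rightarrow>\<^sub>E {1..k}. c 1 \<noteq> c n}"
    by (auto simp: proper_colorings_Dn[OF assms(1)])
  then have "P_diff (Dn_vertices n) (Dn_arcs n) 1 n k = k * (k - 1) * k ^ (n - 2)"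
    using card_PiE_distinct_at_two_points[of "{1..n}" "{1..k}" 1 n] endpoints
    by (simp add: P_diff_def)
  also have "\<dots> = k ^ (n - 1) * (k - 1)"
  proof -
    have "n - 1 = Suc (n - 2)"
      using assms(1) by simp
    then show ?thesis
      by (simp add: mult_ac)
  qed
  finally have diff: "P_diff (Dn_vertices n) (Dn_arcs n) 1 n k = k ^ (n - 1) * (k - 1)" .
  have "P_chrom (Dn_vertices n) (Dn_arcs n) k
          = P_same (Dn_vertices n) (Dn_arcs n) 1 n k + P_diff (Dn_vertices n) (Dn_arcs n) 1 n k"
    by (simp add: P_chrom_eq_P_same_add_P_diff Dn_vertices_def)
  with same diff show ?thesis
    by simp
qed

end
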